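(* Let $n\ge2$. The semigroup $(S_n,\cdot)$ does not satisfy the identity $v_n=v_n'$, where $v_n:=\bigl(x_1x_2\cdots x_{2n}\cdot x_nx_{n-1}\cdots x_1\cdot x_{n+1}x_{n+2}\cdots x_{2n}\bigr)\cdot x_1x_2\cdots x_n$ and $v_n':=\bigl(x_1x_2\cdots x_{2n}\cdot x_nx_{n-1}\cdots x_1\cdot x_{n+1}x_{n+2}\cdots x_{2n}\bigr)^2\cdot x_1x_2\cdots x_n$.
   Context: For $n\ge2$, $S_n$ is the semigroup of partial one-to-one transformations of $\{0,1,\dots,3n+2\}$ (acting on the right, composition $x(\alpha\beta)=(x\alpha)\beta$) that is the inverse semigroup (closed under composition and taking inverse partial maps) generated by $\chi:\ n\mapsto 2n+1,\ n+1\mapsto 2n+2$ and, for $i=1,\dots,n$, $\chi_i:\ i-1\mapsto i,\ n+1+i\mapsto n+i,\ 2n+1+i\mapsto 2n+2+i$ (each undefined elsewhere). *)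

theory Defs
  imports Main
begin

text \<open>Partial transformations of nat are modelled as maps nat \<rightharpoonup> nat.
  Transformations act on the right: x(a b) = (x a) b, so the product a b is
  the map composition of b after a.\<close>

definition pmul :: "(nat \<rightharpoonup> nat) \<Rightarrow> (nat \<rightharpoonup> nat) \<Rightarrow> (nat \<rightharpoonup> nat)" where
  "pmul a b = b \<circ>\<^sub>m a"

definition pinv :: "(nat \<rightharpoonup> nat) \<Rightarrow> (nat \<rightharpoonup> nat)" where
  "pinv f = (\<lambda>y. if \<exists>x. f x = Some y then Some (THE x. f x = Some y) else None)"

definition chi :: "nat \<Rightarrow> (nat \<rightharpoonup> nat)" where
  "chi n = Map.empty(n \<mapsto> 2*n+1, n+1 \<mapsto> 2*n+2)"

definition chi_i :: "nat \<Rightarrow> nat \<Rightarrow> (nat \<rightharpoonup> nat)" where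
  "chi_i n i = Map.empty(i-1 \<mapsto> i, n+1+i \<mapsto> n+i, 2*n+1+i \<mapsto> 2*n+2+i)"

inductive_set S :: "nat \<Rightarrow> (nat \<rightharpoonup> nat) set" for n :: nat where
  gen_chi: "chi n \<in> S n"
| gen_chi_i: "1 \<le> i \<Longrightarrow> i \<le> n \<Longrightarrow> chi_i n i \<in> S n"
| mult: "a \<in> S n \<Longrightarrow> b \<in> S n \<Longrightarrow> pmul a b \<in> S n"
| inv: "a \<in> S n \<Longrightarrow> pinv a \<in> S n"

fun wprod :: "(nat \<rightharpoonup> nat) list \<Rightarrow> (nat \<rightharpoonup> nat)" where
  "wprod [] = Some"
| "wprod (a # as) = foldl pmul a as"

definition weval :: "(nat \<Rightarrow> (nat \<rightharpoonup> nat)) \<Rightarrow> nat list \<Rightarrow> (nat \<rightharpoonup> nat)" where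
  "weval x w = wprod (map x w)"

definition wbase :: "nat \<Rightarrow> nat list" where
  "wbase n = [1..<2*n+1] @ rev [1..<n+1] @ [n+1..<2*n+1]"

definition v_word :: "nat \<Rightarrow> nat list" where
  "v_word n = wbase n @ [1..<n+1]"

definition v'_word :: "nat \<Rightarrow> nat list" where
  "v'_word n = wbase n @ wbase n @ [1..<n+1]"

end

theory Submission
  imports Defs
begin

(* Take x_i = chi_i for i <= n, x_(n+1) = chi, and x_i = chi^-1 chi (the identity
   on {2n+1, 2n+2}) for i > n+1, and follow the point 0.  The common prefix
   x_1...x_2n x_n...x_1 x_(n+1)...x_2n moves it along 0 -> n -> 2n+1 -> n+1 -> 2n+2,
   and x_1...x_n then carries 2n+2 to 3n+2, so v_n is defined at 0.  In v_n' the
   prefix is applied once more from 2n+2: its first block x_1...x_n reaches 3n+2,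
   where x_(n+1) = chi is undefined, so v_n' is undefined at 0. *)

fun run :: "('a \<rightharpoonup> 'a) list \<Rightarrow> 'a \<Rightarrow> 'a option" where
  "run [] p = Some p"
| "run (a # as) p = Option.bind (a p) (run as)"

lemma run_append: "run (as @ bs) p = Option.bind (run as p) (run bs)"
proof (induction as arbitrary: p)
  case Nil
  then show ?case by simp
next
  case (Cons a as)
  then show ?case by (cases "a p") simp_all
qed

lemma foldl_pmul_apply: "foldl pmul c as p = Option.bind (c p) (run as)"
proof (induction as arbitrary: c)
  case Nil
  then show ?case by simp
next
  case (Cons a as)
  have "pmul c a p = Option.bind (c p) a"
    by (simp add: pmul_def map_comp_def split: option.split)
  with Cons.IH show ?case by simp
qed

lemma weval_apply: "weval x w p = run (map x w) p"
  by (cases w) (simp_all add: weval_def foldl_pmul_apply)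

lemma run_upt_chain:
  assumes "i \<le> j" and "\<And>k. i \<le> k \<Longrightarrow> k < j \<Longrightarrow> a k (f k) = Some (f (Suc k))"
  shows "run (map a [i..<j]) (f i) = Some (f j)"
  using assms by (induction j) (auto simp: run_append le_Suc_eq)

lemma run_rev_upt_chain:
  assumes "i \<le> j" and "\<And>k. i \<le> k \<Longrightarrow> k < j \<Longrightarrow> a k (f (Suc k)) = Some (f k)"
  shows "run (map a (rev [i..<j])) (f j) = Some (f i)"
  using assms by (induction j) (auto simp: le_Suc_eq)

lemma run_fixpoint: "\<forall>a\<in>set as. a q = Some q \<Longrightarrow> run as q = Some q"
  by (induction as) auto

lemma pinv_eq_Some:
  assumes "inj_on f (dom f)" and "f x = Some y"
  shows "pinv f y = Some x"
proof -
  have "(THE x'. f x' = Some y) = x"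
    using assms by (intro the_equality) (auto simp: inj_on_def dom_def)
  with assms(2) show ?thesis
    by (auto simp: pinv_def)
qed

lemma pmul_pinv_self_apply:
  "inj_on f (dom f) \<Longrightarrow> f x = Some y \<Longrightarrow> pmul (pinv f) f y = Some y"
  by (simp add: pmul_def pinv_eq_Some)

lemma chi_apply:
  "chi n n = Some (2*n+1)"
  "chi n (n+1) = Some (2*n+2)"
  "chi n (3*n+2) = None"
  by (auto simp: chi_def)

lemma inj_on_dom_chi: "inj_on (chi n) (dom (chi n))"
  by (auto simp: chi_def inj_on_def split: if_splits)

definition separating_assignment :: "nat \<Rightarrow> nat \<Rightarrow> (nat \<rightharpoonup> nat)" where
  "separating_assignment n i =
     (if i \<le> n then chi_i n i
      else if i = n+1 then chi n
      else pmul (pinv (chi n)) (chi n))"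

lemma separating_assignment_in_S:
  "1 \<le> i \<Longrightarrow> separating_assignment n i \<in> S n"
  by (auto simp: separating_assignment_def intro: S.intros)

context
  fixes n :: nat
  assumes n_ge_1: "n \<ge> 1"
begin

private abbreviation "x \<equiv> separating_assignment n"

lemma run_first_block:
  "run (map x [1..<n+1]) 0 = Some n"
  "run (map x [1..<n+1]) (2*n+2) = Some (3*n+2)"
proof -
  have x_eq: "map x [1..<n+1] = map (chi_i n) [1..<n+1]"
    by (simp add: separating_assignment_def del: upt_Suc)
  have "run (map (chi_i n) [1..<n+1]) (1 - 1) = Some (n + 1 - 1)"
    by (rule run_upt_chain[where f = "\<lambda>k. k - 1"]) (auto simp: chi_i_def)
  then show "run (map x [1..<n+1]) 0 = Some n"
    unfolding x_eq by simp
  have "run (map (chi_i n) [1..<n+1]) (2*n+1+1) = Some (2*n+1+(n+1))"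
    by (rule run_upt_chain[where f = "\<lambda>k. 2*n+1+k"]) (auto simp: chi_i_def)
  then show "run (map x [1..<n+1]) (2*n+2) = Some (3*n+2)"
    unfolding x_eq by simp
qed

lemma run_reversed_block: "run (map x (rev [1..<n+1])) (2*n+1) = Some (n+1)"
proof -
  have x_eq: "map x (rev [1..<n+1]) = map (chi_i n) (rev [1..<n+1])"
    by (simp add: separating_assignment_def del: upt_Suc)
  have "run (map (chi_i n) (rev [1..<n+1])) (n+(n+1)) = Some (n+1)"
    by (rule run_rev_upt_chain[where f = "\<lambda>k. n+k"]) (use n_ge_1 in \<open>auto simp: chi_i_def\<close>)
  then show ?thesis
    unfolding x_eq by (simp add: mult_2)
qed

lemma run_second_block:
  "run (map x [n+1..<2*n+1]) n = Some (2*n+1)"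
  "run (map x [n+1..<2*n+1]) (n+1) = Some (2*n+2)"
  "run (map x [n+1..<2*n+1]) (3*n+2) = None"
proof -
  have cons_eq: "map x [n+1..<2*n+1] = chi n # map x [n+2..<2*n+1]"
    using n_ge_1 by (simp add: upt_conv_Cons separating_assignment_def del: upt_Suc)
  have "pmul (pinv (chi n)) (chi n) q = Some q" if "q \<in> {2*n+1, 2*n+2}" for q
    using that pmul_pinv_self_apply[OF inj_on_dom_chi chi_apply(1)]
      pmul_pinv_self_apply[OF inj_on_dom_chi chi_apply(2)] by auto
  then have fixed: "run (map x [n+2..<2*n+1]) q = Some q" if "q \<in> {2*n+1, 2*n+2}" for q
    using that by (intro run_fixpoint) (auto simp: separating_assignment_def)
  show "run (map x [n+1..<2*n+1]) n = Some (2*n+1)"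
    by (simp only: cons_eq run.simps chi_apply Option.bind.simps) (rule fixed, simp)
  show "run (map x [n+1..<2*n+1]) (n+1) = Some (2*n+2)"
    by (simp only: cons_eq run.simps chi_apply Option.bind.simps) (rule fixed, simp)
  show "run (map x [n+1..<2*n+1]) (3*n+2) = None"
    by (simp only: cons_eq run.simps chi_apply Option.bind.simps)
qed

lemma map_wbase:
  "map x (wbase n) = map x [1..<n+1] @ map x [n+1..<2*n+1] @ map x (rev [1..<n+1])
     @ map x [n+1..<2*n+1]"
  using upt_add_eq_append[of 1 "n+1" n] by (simp add: wbase_def mult_2 del: upt_Suc)

lemma run_wbase:
  "run (map x (wbase n)) 0 = Some (2*n+2)"
  "run (map x (wbase n)) (2*n+2) = None"
  by (simp_all only: map_wbase run_append run_first_block run_second_block run_reversed_block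
      Option.bind.simps)

end

theorem proposition5p3:
  fixes n :: nat
  assumes "n \<ge> 2"
  shows "\<exists>x :: nat \<Rightarrow> (nat \<rightharpoonup> nat).
           (\<forall>i\<in>{1..2*n}. x i \<in> S n) \<and> weval x (v_word n) \<noteq> weval x (v'_word n)"
proof (intro exI conjI)
  let ?x = "separating_assignment n"
  have "n \<ge> 1" using assms by simp
  show "\<forall>i\<in>{1..2*n}. ?x i \<in> S n"
    by (simp add: separating_assignment_in_S)
  have "weval ?x (v_word n) 0 = Some (3*n+2)"
    using \<open>n \<ge> 1\<close> by (simp only: weval_apply v_word_def map_append run_append run_wbase
        run_first_block Option.bind.simps)
  moreover have "weval ?x (v'_word n) 0 = None"
    using \<open>n \<ge> 1\<close> by (simp only: weval_apply v'_word_def map_append run_append run_wbase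
        Option.bind.simps)
  ultimately show "weval ?x (v_word n) \<noteq> weval ?x (v'_word n)"
    by auto
qed

end
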